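(* Fix an environment $(\mathcal{S},\mathcal{A},\mathcal{T},d_0,\_,\gamma)$ and a set $\Pi$ of stationary policies whose discounted visit counts are collinear, i.e. all vectors $\mathcal{F}^\pi$, $\pi\in\Pi$, lie on a single line in $\mathbb{R}^{|\mathcal{S}||\mathcal{A}|}$. Then every pair of reward functions $(\mathcal{R},\mathcal{R}')$ such that $J_{\mathcal{R}}$ and $J_{\mathcal{R}'}$ are both non-trivial on $\Pi$ and not equivalent on $\Pi$ is hackable relative to $\Pi$ and this environment.
   Context: A Markov decision process is $(\mathcal{S},\mathcal{A},\mathcal{T},d_0,\mathcal{R},\gamma)$ with finite $\mathcal{S}$, finite $\mathcal{A}$ with $|\mathcal{A}|>1$, transition model $\mathcal{T}:\mathcal{S}\times\mathcal{A}\to\Delta(\mathcal{S})$, initial distribution $d_0$, reward $\mathcal{R}:\mathcal{S}\times\mathcal{A}\to\mathbb{R}$, $\gamma\in[0,1)$; all states reachable. An environment is an MDP without its reward function. A stationary policy is $\pi:\mathcal{S}\to\Delta(\mathcal{A})$. The discounted visit counts are $\mathcal{F}^\pi(s,a)=\mathbb{E}\big[\sum_{t\ge0}\gamma^t\mathbb{1}(s_t=s,a_t=a)\big]$ with $s_0\sim d_0$, $a_t\sim\pi(\cdot\mid s_t)$, $s_{t+1}\sim\mathcal{T}(\cdot\mid s_t,a_t)$, and $J_{\mathcal{R}}(\pi)=\langle\mathcal{R},\mathcal{F}^\pi\rangle$. $J$ is trivial on $\Pi$ if constant on $\Pi$; $J_1,J_2$ are equivalent on $\Pi$ if for all $\pi,\pi'\in\Pi$,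 $J_1(\pi)\ge J_1(\pi')\iff J_2(\pi)\ge J_2(\pi')$. Reward functions $\mathcal{R},\mathcal{R}'$ are hackable relative to $\Pi$ and an environment if there exist $\pi,\pi'\in\Pi$ with $J_{\mathcal{R}}(\pi)>J_{\mathcal{R}}(\pi')$ and $J_{\mathcal{R}'}(\pi')>J_{\mathcal{R}'}(\pi)$; otherwise unhackable. *)

theory Defs
  imports "HOL-Analysis.Analysis"
begin

definition is_dist :: "('x::finite \<Rightarrow> real) \<Rightarrow> bool" where
  "is_dist p \<longleftrightarrow> (\<forall>x. 0 \<le> p x) \<and> (\<Sum>x\<in>UNIV. p x) = 1"

definition is_env :: "('s::finite \<Rightarrow> 'a::finite \<Rightarrow> 's \<Rightarrow> real) \<Rightarrow> ('s \<Rightarrow> real) \<Rightarrow> real \<Rightarrow> bool" where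
  "is_env T d0 \<gamma> \<longleftrightarrow> (\<forall>s a. is_dist (T s a)) \<and> is_dist d0 \<and> 0 \<le> \<gamma> \<and> \<gamma> < 1"

definition is_policy :: "('s::finite \<Rightarrow> 'a::finite \<Rightarrow> real) \<Rightarrow> bool" where
  "is_policy \<pi> \<longleftrightarrow> (\<forall>s. is_dist (\<pi> s))"

fun state_dist :: "('s::finite \<Rightarrow> 'a::finite \<Rightarrow> 's \<Rightarrow> real) \<Rightarrow> ('s \<Rightarrow> real) \<Rightarrow> ('s \<Rightarrow> 'a \<Rightarrow> real) \<Rightarrow> nat \<Rightarrow> 's \<Rightarrow> real" where
  "state_dist T d0 \<pi> 0 s = d0 s"
| "state_dist T d0 \<pi> (Suc t) s' =
     (\<Sum>s\<in>UNIV. \<Sum>a\<in>UNIV. state_dist T d0 \<pi> t s * \<pi> s a * T s a s')"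

definition all_reachable :: "('s::finite \<Rightarrow> 'a::finite \<Rightarrow> 's \<Rightarrow> real) \<Rightarrow> ('s \<Rightarrow> real) \<Rightarrow> bool" where
  "all_reachable T d0 \<longleftrightarrow> (\<forall>s. \<exists>\<pi> t. is_policy \<pi> \<and> 0 < state_dist T d0 \<pi> t s)"

definition visit_counts :: "('s::finite \<Rightarrow> 'a::finite \<Rightarrow> 's \<Rightarrow> real) \<Rightarrow> ('s \<Rightarrow> real) \<Rightarrow> real \<Rightarrow> ('s \<Rightarrow> 'a \<Rightarrow> real) \<Rightarrow> ('s \<times> 'a \<Rightarrow> real)" where
  "visit_counts T d0 \<gamma> \<pi> = (\<lambda>(s, a). \<Sum>t. \<gamma> ^ t * (state_dist T d0 \<pi> t s * \<pi> s a))"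

definition J :: "('s::finite \<Rightarrow> 'a::finite \<Rightarrow> 's \<Rightarrow> real) \<Rightarrow> ('s \<Rightarrow> real) \<Rightarrow> real \<Rightarrow> ('s \<times> 'a \<Rightarrow> real) \<Rightarrow> ('s \<Rightarrow> 'a \<Rightarrow> real) \<Rightarrow> real" where
  "J T d0 \<gamma> R \<pi> = (\<Sum>x\<in>UNIV. R x * visit_counts T d0 \<gamma> \<pi> x)"

definition trivial_on :: "('p \<Rightarrow> real) \<Rightarrow> 'p set \<Rightarrow> bool" where
  "trivial_on f P \<longleftrightarrow> (\<forall>\<pi>\<in>P. \<forall>\<pi>'\<in>P. f \<pi> = f \<pi>')"

definition equivalent_on :: "('p \<Rightarrow> real) \<Rightarrow> ('p \<Rightarrow> real) \<Rightarrow> 'p set \<Rightarrow> bool" where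
  "equivalent_on f g P \<longleftrightarrow> (\<forall>\<pi>\<in>P. \<forall>\<pi>'\<in>P. (f \<pi> \<ge> f \<pi>') \<longleftrightarrow> (g \<pi> \<ge> g \<pi>'))"

definition hackable :: "('s::finite \<Rightarrow> 'a::finite \<Rightarrow> 's \<Rightarrow> real) \<Rightarrow> ('s \<Rightarrow> real) \<Rightarrow> real \<Rightarrow> ('s \<Rightarrow> 'a \<Rightarrow> real) set \<Rightarrow> ('s \<times> 'a \<Rightarrow> real) \<Rightarrow> ('s \<times> 'a \<Rightarrow> real) \<Rightarrow> bool" where
  "hackable T d0 \<gamma> P R R' \<longleftrightarrow> (\<exists>\<pi>\<in>P. \<exists>\<pi>'\<in>P.
     J T d0 \<gamma> R \<pi> > J T d0 \<gamma> R \<pi>' \<and> J T d0 \<gamma> R' \<pi>' > J T d0 \<gamma> R' \<pi>)"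

definition collinear_vecs :: "('x \<Rightarrow> real) set \<Rightarrow> bool" where
  "collinear_vecs V \<longleftrightarrow> (\<exists>p v. \<forall>x\<in>V. \<exists>c::real. x = (\<lambda>i. p i + c * v i))"

end

theory Submission
  imports Defs
begin

text \<open>
  \<open>J\<^sub>R(\<pi>) = \<langle>R, F\<^sup>\<pi>\<rangle>\<close> is linear in the visit counts, so on a line \<open>F\<^sup>\<pi> = p + c(\<pi>) v\<close>
  both objectives are affine functions \<open>A + c(\<pi>) B\<close> and \<open>A' + c(\<pi>) B'\<close> of the same real
  parameter. Non-triviality makes both slopes non-zero; slopes of equal sign would make the
  objectives order the policies identically, so the slopes have opposite signs, and any two
  policies with different parameters are then ranked oppositely.
\<close>

lemma J_on_line:
  assumes "visit_counts T d0 \<gamma> \<pi> = (\<lambda>i. p i + c * v i)"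
  shows "J T d0 \<gamma> R \<pi> = (\<Sum>x\<in>UNIV. R x * p x) + c * (\<Sum>x\<in>UNIV. R x * v x)"
  unfolding J_def assms by (simp add: algebra_simps sum.distrib sum_distrib_left)

lemma opposite_differences_imp_reversed_pair:
  fixes f g :: "'p \<Rightarrow> real"
  assumes "x \<in> P" "y \<in> P" and "(f x - f y) * (g x - g y) < 0"
  shows "\<exists>\<pi>\<in>P. \<exists>\<pi>'\<in>P. f \<pi> > f \<pi>' \<and> g \<pi>' > g \<pi>"
proof -
  have "(f x > f y \<and> g y > g x) \<or> (f y > f x \<and> g x > g y)"
    using assms(3) by (simp add: mult_less_0_iff)
  then show ?thesis using assms(1,2) by blast
qed

lemma affine_equivalent_on:
  fixes f g c :: "'p \<Rightarrow> real"
  assumes f: "\<forall>\<pi>\<in>P. f \<pi> = A + c \<pi> * B"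
    and g: "\<forall>\<pi>\<in>P. g \<pi> = A' + c \<pi> * B'"
    and "0 < B * B'"
  shows "equivalent_on f g P"
proof -
  have "(0 < B \<and> 0 < B') \<or> (B < 0 \<and> B' < 0)"
    using \<open>0 < B * B'\<close> by (auto simp: zero_less_mult_iff)
  then show ?thesis
    unfolding equivalent_on_def using f g by (auto simp: mult_le_cancel_right)
qed

lemma affine_nontrivial_slope:
  fixes f c :: "'p \<Rightarrow> real"
  assumes "\<forall>\<pi>\<in>P. f \<pi> = A + c \<pi> * B" and "\<not> trivial_on f P"
  shows "B \<noteq> 0"
  using assms unfolding trivial_on_def by auto

lemma affine_nonequivalent_imp_reversed_pair:
  fixes f g c :: "'p \<Rightarrow> real"
  assumes f: "\<forall>\<pi>\<in>P. f \<pi> = A + c \<pi> * B"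
    and g: "\<forall>\<pi>\<in>P. g \<pi> = A' + c \<pi> * B'"
    and nontrivial_f: "\<not> trivial_on f P" and nontrivial_g: "\<not> trivial_on g P"
    and not_equivalent: "\<not> equivalent_on f g P"
  shows "\<exists>\<pi>\<in>P. \<exists>\<pi>'\<in>P. f \<pi> > f \<pi>' \<and> g \<pi>' > g \<pi>"
proof -
  obtain x y where xy: "x \<in> P" "y \<in> P" "f x \<noteq> f y"
    using nontrivial_f unfolding trivial_on_def by auto
  then have "c x \<noteq> c y" using f by auto
  have "B * B' \<noteq> 0"
    using affine_nontrivial_slope[OF f nontrivial_f] affine_nontrivial_slope[OF g nontrivial_g]
    by simp
  moreover have "\<not> 0 < B * B'"
    using affine_equivalent_on[OF f g] not_equivalent by blast
  ultimately have "B * B' < 0" by linarith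
  have "f x - f y = (c x - c y) * B" "g x - g y = (c x - c y) * B'"
    using f g xy(1,2) by (simp_all add: algebra_simps)
  then have "(f x - f y) * (g x - g y) = (c x - c y)\<^sup>2 * (B * B')"
    by (simp add: power2_eq_square mult_ac)
  also have "\<dots> < 0"
    using \<open>c x \<noteq> c y\<close> \<open>B * B' < 0\<close> by (simp add: mult_pos_neg)
  finally show ?thesis
    by (rule opposite_differences_imp_reversed_pair[OF xy(1,2)])
qed

theorem mainTheorem2:
  fixes T :: "'s::finite \<Rightarrow> 'a::finite \<Rightarrow> 's \<Rightarrow> real"
    and d0 :: "'s \<Rightarrow> real" and \<gamma> :: real
    and P :: "('s \<Rightarrow> 'a \<Rightarrow> real) set"
  assumes "CARD('a) > 1"
    and "is_env T d0 \<gamma>"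
    and "all_reachable T d0"
    and "\<forall>\<pi>\<in>P. is_policy \<pi>"
    and "collinear_vecs (visit_counts T d0 \<gamma> ` P)"
  shows "\<forall>R R'. \<not> trivial_on (J T d0 \<gamma> R) P \<and> \<not> trivial_on (J T d0 \<gamma> R') P
           \<and> \<not> equivalent_on (J T d0 \<gamma> R) (J T d0 \<gamma> R') P
           \<longrightarrow> hackable T d0 \<gamma> P R R'"
proof (intro allI impI)
  obtain p v where "\<forall>\<pi>\<in>P. \<exists>c::real. visit_counts T d0 \<gamma> \<pi> = (\<lambda>i. p i + c * v i)"
    using assms(5) unfolding collinear_vecs_def by blast
  then obtain c where on_line: "\<forall>\<pi>\<in>P. visit_counts T d0 \<gamma> \<pi> = (\<lambda>i. p i + c \<pi> * v i)"
    by metis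
  fix R R'
  assume "\<not> trivial_on (J T d0 \<gamma> R) P \<and> \<not> trivial_on (J T d0 \<gamma> R') P
           \<and> \<not> equivalent_on (J T d0 \<gamma> R) (J T d0 \<gamma> R') P"
  with on_line show "hackable T d0 \<gamma> P R R'"
    unfolding hackable_def
    by (intro affine_nonequivalent_imp_reversed_pair[where c = c]) (auto simp: J_on_line)
qed

end
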